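(* Assume the scores are produced by a symmetric transformation. Let $\widehat{\mathcal{T}}\subset\{h,\ldots,n-h\}$ be any set of detected changepoints (possibly obtained from the same data by any algorithm) and $\widehat{\mathcal{T}}_R=\{\widehat\tau\in\widehat{\mathcal{T}}:T_{n,\widehat\tau}>t_{\alpha,B}\}$. Then for every $\alpha\in(0,1)$ and integer $B\ge1$, $\mathrm{FWER}=\Pr\{\text{there exists }\widehat\tau\in\widehat{\mathcal{T}}_R\cap\mathcal{G}\}\le\alpha.$
   Context: Data: independent $Z_1,\ldots,Z_n$ in a measurable space $\mathcal{Z}$, $\mathcal{D}=(Z_1,\ldots,Z_n)$, with $K^*\ge0$ changepoints $0=\tau^*_0<\tau^*_1<\cdots<\tau^*_{K^*}<\tau^*_{K^*+1}=n$: the $Z_i$, $i\in(\tau^*_{k-1},\tau^*_k]$, are identically distributed with law $P^*_k$, $P^*_{k+1}\ne P^*_k$; $\mathcal{T}^*=\{\tau^*_1,\ldots,\tau^*_{K^*}\}$. A measurable $\mathbb{S}:\mathcal{Z}\times\mathcal{Z}^n\to\mathbb{R}$ is a symmetric transformation if $\mathbb{S}(z;\mathcal{D})=\mathbb{S}(z;\mathcal{D}_\pi)$ for all $z$ and permutations $\pi$ of $[n]$, $\mathcal{D}_\pi=(Z_{\pi(1)},\ldots,Z_{\pi(n)})$. Scores: $S_i=\mathbb{S}(Z_i;\mathcal{D})+\epsilon e_i$, fixed $\epsilon>0$, $e_i$ i.i.d. $\mathcal{N}(0,1)$ independent of the data. Fix a window $h\ge1$ and use the intervals $\mathcal{I}_\ell=(\ell-h,\ell+h]\cap\mathbb{Z}$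 for $\ell=h,\ldots,n-h$. Local ranks $R_{i,\ell}=|\{j\in\mathcal{I}_\ell:S_j\le S_i\}|$; an aggregation function $\mathbb{A}$ maps finite rank vectors to $[0,\infty)$ and $T_{n,\ell}=\mathbb{A}((R_{i,\ell})_{i\in\mathcal{I}_\ell})$. For a permutation $\pi$ of $[n]$, $\mathbb{G}(\pi)_\ell=\mathbb{A}\big((|\{j\in\mathcal{I}_\ell:\pi(j)\le\pi(i)\}|)_{i\in\mathcal{I}_\ell}\big)$. With $\pi_1,\ldots,\pi_B$ i.i.d. uniform permutations independent of the data, $t_{\alpha,B}$ is the $\lceil(1-\alpha)(B+1)\rceil$-th smallest of $\{\|\mathbb{G}(\pi_b)\|_\infty:b\in[B]\}$ ($+\infty$ if this index exceeds $B$). The set of true-null locations is $\mathcal{G}=\{\tau\in\mathbb{Z}: h\le\tau\le n-h,\ (\tau-h,\tau+h]\cap\mathcal{T}^*=\emptyset\}$. *)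

theory Defs
  imports "HOL-Probability.Probability" "HOL-Combinatorics.Permutations"
begin

(* Observations Z_1..Z_n are indexed by {1..n}; a data set is D :: nat => 'z
   (values outside {1..n} irrelevant).  Q i is the law of Z_i. *)

definition changepoints :: "(nat \<Rightarrow> 'z measure) \<Rightarrow> nat \<Rightarrow> nat set" where
  "changepoints Q n = {\<tau>. 1 \<le> \<tau> \<and> \<tau> < n \<and> Q \<tau> \<noteq> Q (Suc \<tau>)}"

definition window :: "nat \<Rightarrow> nat \<Rightarrow> nat set" where
  "window h l = {l - h <.. l + h}"

definition true_null :: "(nat \<Rightarrow> 'z measure) \<Rightarrow> nat \<Rightarrow> nat \<Rightarrow> nat set" where
  "true_null Q n h = {\<tau>. h \<le> \<tau> \<and> \<tau> \<le> n - h \<and> window h \<tau> \<inter> changepoints Q n = {}}"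

definition symmetric_transformation ::
  "'z measure \<Rightarrow> nat \<Rightarrow> ('z \<Rightarrow> (nat \<Rightarrow> 'z) \<Rightarrow> real) \<Rightarrow> bool" where
  "symmetric_transformation N n Sf \<longleftrightarrow>
     (\<lambda>(z, D). Sf z D) \<in> borel_measurable (N \<Otimes>\<^sub>M PiM {1..n} (\<lambda>_. N)) \<and>
     (\<forall>z D \<pi>. \<pi> permutes {1..n} \<longrightarrow> Sf z (D \<circ> \<pi>) = Sf z D)"

definition scores ::
  "('z \<Rightarrow> (nat \<Rightarrow> 'z) \<Rightarrow> real) \<Rightarrow> real \<Rightarrow> (nat \<Rightarrow> 'z) \<Rightarrow> (nat \<Rightarrow> real) \<Rightarrow> nat \<Rightarrow> real" where
  "scores Sf \<epsilon> D e i = Sf (D i) D + \<epsilon> * e i"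

definition local_rank :: "nat \<Rightarrow> (nat \<Rightarrow> 'a::linorder) \<Rightarrow> nat \<Rightarrow> nat \<Rightarrow> nat" where
  "local_rank h S i l = card {j \<in> window h l. S j \<le> S i}"

definition rank_vector :: "nat \<Rightarrow> (nat \<Rightarrow> 'a::linorder) \<Rightarrow> nat \<Rightarrow> nat list" where
  "rank_vector h S l = map (\<lambda>i. local_rank h S i l) [l - h + 1 ..< l + h + 1]"

definition local_stat :: "(nat list \<Rightarrow> real) \<Rightarrow> nat \<Rightarrow> (nat \<Rightarrow> real) \<Rightarrow> nat \<Rightarrow> real" where
  "local_stat A h S l = A (rank_vector h S l)"

definition Gperm :: "(nat list \<Rightarrow> real) \<Rightarrow> nat \<Rightarrow> (nat \<Rightarrow> nat) \<Rightarrow> nat \<Rightarrow> real" where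
  "Gperm A h \<pi> l = A (rank_vector h \<pi> l)"

definition Gnorm :: "(nat list \<Rightarrow> real) \<Rightarrow> nat \<Rightarrow> nat \<Rightarrow> (nat \<Rightarrow> nat) \<Rightarrow> real" where
  "Gnorm A n h \<pi> = Max ((\<lambda>l. \<bar>Gperm A h \<pi> l\<bar>) ` {h..n - h})"

definition kth_smallest :: "nat \<Rightarrow> real list \<Rightarrow> ereal" where
  "kth_smallest k xs = (if k \<le> length xs then ereal (sort xs ! (k - 1)) else \<infinity>)"

definition perm_threshold ::
  "(nat list \<Rightarrow> real) \<Rightarrow> nat \<Rightarrow> nat \<Rightarrow> real \<Rightarrow> nat \<Rightarrow> (nat \<Rightarrow> nat \<Rightarrow> nat) \<Rightarrow> ereal" where
  "perm_threshold A n h \<alpha> B Ps =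
     kth_smallest (nat \<lceil>(1 - \<alpha>) * real (B + 1)\<rceil>) (map (\<lambda>b. Gnorm A n h (Ps b)) [1..<B + 1])"

definition std_normal :: "real measure" where
  "std_normal = density lborel std_normal_density"

definition uniform_perm :: "nat \<Rightarrow> (nat \<Rightarrow> nat) measure" where
  "uniform_perm n = measure_pmf (pmf_of_set {\<pi>. \<pi> permutes {1..n}})"

definition joint_space ::
  "(nat \<Rightarrow> 'z measure) \<Rightarrow> nat \<Rightarrow> nat \<Rightarrow>
   ((nat \<Rightarrow> 'z) \<times> (nat \<Rightarrow> real) \<times> (nat \<Rightarrow> nat \<Rightarrow> nat)) measure" where
  "joint_space Q n B = PiM {1..n} Q \<Otimes>\<^sub>M (PiM {1..n} (\<lambda>_. std_normal) \<Otimes>\<^sub>M PiM {1..B} (\<lambda>_. uniform_perm n))"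

end

theory Submission
  imports Defs
begin

(*
  Every window (tau - h, tau + h] around a true-null location tau lies inside a block of identically
  distributed observations, so T_{n,tau} depends on the scores only through their relative order within
  blocks. Permuting the observations inside the blocks preserves the joint law, and by the symmetry of
  the transformation the scores are permuted along with the data; the Gaussian noise makes them almost
  surely distinct. Averaging over these block permutations therefore replaces the ranks of the scores by
  a uniformly random permutation pi, at which every local statistic is at most ||G(pi)||_inf.
  Finally ||G(pi)||_inf, ||G(pi_1)||_inf, ..., ||G(pi_B)||_inf are i.i.d., and among B + 1 values at most
  B + 1 - K have K others strictly below them; so a false rejection has probability at most
  (B + 1 - K) / (B + 1) <= alpha for K = ceil((1 - alpha) (B + 1)).
*)

section \<open>The permutation threshold\<close>

lemma sorted_nth_less_iff:
  fixes xs :: "'a::linorder list"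
  assumes sorted: "sorted xs" and k: "0 < k" "k \<le> length xs"
  shows "xs ! (k - 1) < c \<longleftrightarrow> k \<le> length (filter (\<lambda>x. x < c) xs)"
proof
  assume less: "xs ! (k - 1) < c"
  have "xs ! i < c" if "i < k" for i
  proof -
    have "xs ! i \<le> xs ! (k - 1)" using sorted k that by (intro sorted_nth_mono) auto
    then show ?thesis using less by simp
  qed
  then have "{..<k} \<subseteq> {i. i < length xs \<and> xs ! i < c}" using k by auto
  then have "card {..<k} \<le> card {i. i < length xs \<and> xs ! i < c}" by (intro card_mono) auto
  then show "k \<le> length (filter (\<lambda>x. x < c) xs)" by (simp add: length_filter_conv_card)
next
  assume count: "k \<le> length (filter (\<lambda>x. x < c) xs)"
  show "xs ! (k - 1) < c"
  proof (rule ccontr)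
    assume not_less: "\<not> xs ! (k - 1) < c"
    have "i < k - 1" if "i < length xs" "xs ! i < c" for i
    proof (rule ccontr)
      assume "\<not> i < k - 1"
      then have "xs ! (k - 1) \<le> xs ! i" using sorted that by (intro sorted_nth_mono) auto
      then show False using not_less that by simp
    qed
    then have "{i. i < length xs \<and> xs ! i < c} \<subseteq> {..<k - 1}" by auto
    then have "card {i. i < length xs \<and> xs ! i < c} \<le> card {..<k - 1}" by (intro card_mono) auto
    with count k show False by (simp add: length_filter_conv_card)
  qed
qed

lemma kth_smallest_less_iff:
  assumes "0 < k"
  shows "kth_smallest k xs < ereal c \<longleftrightarrow> k \<le> length (filter (\<lambda>x. x < c) xs)"
proof (cases "k \<le> length xs")
  case True
  have "length (filter (\<lambda>x. x < c) (sort xs)) = length (filter (\<lambda>x. x < c) xs)"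
    by (metis mset_filter mset_sort size_mset)
  with True assms sorted_nth_less_iff[of "sort xs" k c] show ?thesis by (simp add: kth_smallest_def)
next
  case False
  moreover have "\<not> k \<le> length (filter (\<lambda>x. x < c) xs)"
    using False length_filter_le[of "\<lambda>x. x < c" xs] by linarith
  ultimately show ?thesis by (simp add: kth_smallest_def)
qed

lemma length_filter_map_upt:
  "length (filter P (map f [a..<b])) = card {i\<in>{a..<b}. P (f i)}"
proof -
  have "length (filter P (map f [a..<b])) = length (filter (P \<circ> f) [a..<b])"
    by (simp add: filter_map)
  also have "\<dots> = card {i\<in>{a..<b}. P (f i)}"
    by (simp add: distinct_length_filter Int_def conj_commute)
  finally show ?thesis .
qed

lemma perm_threshold_less_iff:
  assumes "\<alpha> < 1"
  shows "perm_threshold A n h \<alpha> B Ps < ereal c \<longleftrightarrow>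
    nat \<lceil>(1 - \<alpha>) * real (B + 1)\<rceil> \<le> card {b\<in>{1..B}. Gnorm A n h (Ps b) < c}"
proof -
  have "0 < (1 - \<alpha>) * real (B + 1)" using assms by simp
  then have pos: "0 < nat \<lceil>(1 - \<alpha>) * real (B + 1)\<rceil>" by simp
  have "perm_threshold A n h \<alpha> B Ps < ereal c \<longleftrightarrow> nat \<lceil>(1 - \<alpha>) * real (B + 1)\<rceil>
      \<le> length (filter (\<lambda>x. x < c) (map (\<lambda>b. Gnorm A n h (Ps b)) [1..<B + 1]))"
    unfolding perm_threshold_def by (rule kth_smallest_less_iff[OF pos])
  moreover have "{1..<B + 1} = {1..B}" by auto
  ultimately show ?thesis by (simp only: length_filter_map_upt)
qed

lemma diff_nat_ceiling_le:
  assumes "0 \<le> \<alpha>"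
  shows "real (m - nat \<lceil>(1 - \<alpha>) * real m\<rceil>) \<le> \<alpha> * real m"
proof -
  have "(1 - \<alpha>) * real m \<le> real (nat \<lceil>(1 - \<alpha>) * real m\<rceil>)" by (rule real_nat_ceiling_ge)
  then show ?thesis
    using assms by (cases "nat \<lceil>(1 - \<alpha>) * real m\<rceil> \<le> m") (auto simp: of_nat_diff algebra_simps)
qed

section \<open>Within-class ranks and label-preserving permutations\<close>

definition strict_rank :: "('a \<Rightarrow> 'b::linorder) \<Rightarrow> 'a set \<Rightarrow> 'a \<Rightarrow> nat" where
  "strict_rank f C x = card {j\<in>C. f j < f x}"

lemma strict_rank_less_card:
  assumes "finite C" "i \<in> C"
  shows "strict_rank f C i < card C"
  unfolding strict_rank_def using assms by (intro psubset_card_mono) auto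

lemma strict_rank_strict_mono:
  assumes "finite C" "i \<in> C" "f i < f j"
  shows "strict_rank f C i < strict_rank f C j"
  unfolding strict_rank_def using assms by (intro psubset_card_mono) auto

lemma strict_rank_le_iff:
  assumes "finite C" "inj_on f C" "i \<in> C" "j \<in> C"
  shows "strict_rank f C i \<le> strict_rank f C j \<longleftrightarrow> f i \<le> f j"
proof (cases "i = j")
  case False
  then have "f i \<noteq> f j" using assms(2-4) by (meson inj_on_eq_iff)
  then consider "f i < f j" | "f j < f i" by (rule neqE)
  then show ?thesis
    using strict_rank_strict_mono[OF assms(1,3), of f j] strict_rank_strict_mono[OF assms(1,4), of f i]
    by cases auto
qed simp

lemma bij_betw_strict_rank:
  assumes C: "finite C" and inj: "inj_on f C"
  shows "bij_betw (strict_rank f C) C {..<card C}"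
proof -
  have inj_rank: "inj_on (strict_rank f C) C"
    using strict_rank_le_iff[OF C inj] inj by (intro inj_onI) (metis inj_on_eq_iff order.antisym order.refl)
  moreover have "strict_rank f C ` C \<subseteq> {..<card C}" using strict_rank_less_card[OF C] by auto
  moreover have "card (strict_rank f C ` C) = card {..<card C}" using card_image[OF inj_rank] by simp
  ultimately show ?thesis by (simp add: bij_betw_def card_subset_eq)
qed

definition label_perms :: "('a \<Rightarrow> 'c) \<Rightarrow> 'a set \<Rightarrow> ('a \<Rightarrow> 'a) set" where
  "label_perms q I = {\<sigma>. \<sigma> permutes I \<and> (\<forall>i\<in>I. q (\<sigma> i) = q i)}"

definition same_class_order :: "('a \<Rightarrow> 'c) \<Rightarrow> 'a set \<Rightarrow> ('a \<Rightarrow> 'b::linorder) \<Rightarrow> ('a \<Rightarrow> 'b) \<Rightarrow> bool" where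
  "same_class_order q I s s' \<longleftrightarrow> (\<forall>i\<in>I. \<forall>j\<in>I. q i = q j \<longrightarrow> (s i \<le> s j \<longleftrightarrow> s' i \<le> s' j))"

(* i goes to the element of its class whose s'-rank is the s-rank of i *)
definition rank_match :: "('a \<Rightarrow> 'c) \<Rightarrow> 'a set \<Rightarrow> ('a \<Rightarrow> 'b::linorder) \<Rightarrow> ('a \<Rightarrow> 'b) \<Rightarrow> 'a \<Rightarrow> 'a" where
  "rank_match q I s s' i = (if i \<in> I then inv_into {j\<in>I. q j = q i} (strict_rank s' {j\<in>I. q j = q i})
     (strict_rank s {j\<in>I. q j = q i} i) else i)"

lemma rank_match:
  assumes I: "finite I" and s: "inj_on s I" and s': "inj_on s' I" and i: "i \<in> I"
  shows "rank_match q I s s' i \<in> I" "q (rank_match q I s s' i) = q i"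
    "strict_rank s' {j\<in>I. q j = q i} (rank_match q I s s' i) = strict_rank s {j\<in>I. q j = q i} i"
proof -
  let ?C = "{j\<in>I. q j = q i}"
  have C: "finite ?C" "inj_on s' ?C" using I s' by (auto intro: inj_on_subset)
  have "strict_rank s ?C i \<in> {..<card ?C}"
    using strict_rank_less_card[of ?C i s] I i by simp
  then have "strict_rank s ?C i \<in> strict_rank s' ?C ` ?C"
    using bij_betw_strict_rank[OF C] by (simp add: bij_betw_def)
  then have "inv_into ?C (strict_rank s' ?C) (strict_rank s ?C i) \<in> ?C"
    "strict_rank s' ?C (inv_into ?C (strict_rank s' ?C) (strict_rank s ?C i)) = strict_rank s ?C i"
    by (rule inv_into_into, rule f_inv_into_f)
  then have "rank_match q I s s' i \<in> ?C \<and> strict_rank s' ?C (rank_match q I s s' i) = strict_rank s ?C i"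
    using i by (simp add: rank_match_def)
  then show "rank_match q I s s' i \<in> I" "q (rank_match q I s s' i) = q i"
    "strict_rank s' ?C (rank_match q I s s' i) = strict_rank s ?C i"
    by auto
qed

lemma rank_match_in_label_perms:
  assumes I: "finite I" and s: "inj_on s I" and s': "inj_on s' I"
  shows "rank_match q I s s' \<in> label_perms q I"
proof -
  let ?\<kappa> = "rank_match q I s s'"
  note \<kappa> = rank_match[where q = q, OF I s s']
  have "inj_on ?\<kappa> I"
  proof (rule inj_onI)
    fix i j assume ij: "i \<in> I" "j \<in> I" "?\<kappa> i = ?\<kappa> j"
    then have "q i = q j" by (metis \<kappa>(2))
    then have "strict_rank s {k\<in>I. q k = q i} i = strict_rank s {k\<in>I. q k = q i} j"
      using \<kappa>(3)[OF ij(1)] \<kappa>(3)[OF ij(2)] ij(3) by simp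
    moreover have "inj_on (strict_rank s {k\<in>I. q k = q i}) {k\<in>I. q k = q i}"
      using bij_betw_strict_rank[of "{k\<in>I. q k = q i}" s] I s by (auto simp: bij_betw_def intro: inj_on_subset)
    ultimately show "i = j" using ij \<open>q i = q j\<close> by (auto dest: inj_onD)
  qed
  moreover have "?\<kappa> ` I \<subseteq> I" using \<kappa>(1) by auto
  ultimately have "?\<kappa> ` I = I" using endo_inj_surj[OF I] by blast
  then have "?\<kappa> permutes I"
    using \<open>inj_on ?\<kappa> I\<close> by (intro bij_imp_permutes) (auto simp: bij_betw_def rank_match_def)
  then show ?thesis using \<kappa>(2) by (simp add: label_perms_def)
qed

lemma same_class_order_rank_match:
  assumes I: "finite I" and s: "inj_on s I" and s': "inj_on s' I"
  shows "same_class_order q I (s' \<circ> rank_match q I s s') s"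
  unfolding same_class_order_def
proof (intro ballI impI)
  fix i j assume ij: "i \<in> I" "j \<in> I" "q i = q j"
  let ?C = "{k\<in>I. q k = q i}" and ?\<kappa> = "rank_match q I s s'"
  note \<kappa> = rank_match[where q = q, OF I s s']
  have C: "finite ?C" "inj_on s ?C" "inj_on s' ?C" using I s s' by (auto intro: inj_on_subset)
  have "s' (?\<kappa> i) \<le> s' (?\<kappa> j) \<longleftrightarrow> strict_rank s' ?C (?\<kappa> i) \<le> strict_rank s' ?C (?\<kappa> j)"
    using \<kappa>(1,2)[OF ij(1)] \<kappa>(1,2)[OF ij(2)] ij by (intro strict_rank_le_iff[symmetric] C) auto
  also have "\<dots> \<longleftrightarrow> strict_rank s ?C i \<le> strict_rank s ?C j"
    using \<kappa>(3)[OF ij(1)] \<kappa>(3)[OF ij(2)] ij(3) by simp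
  also have "\<dots> \<longleftrightarrow> s i \<le> s j"
    using ij by (intro strict_rank_le_iff C) auto
  finally show "(s' \<circ> ?\<kappa>) i \<le> (s' \<circ> ?\<kappa>) j \<longleftrightarrow> s i \<le> s j" by simp
qed

lemma label_perms_compose: "\<kappa> \<in> label_perms q I \<Longrightarrow> \<sigma> \<in> label_perms q I \<Longrightarrow> \<kappa> \<circ> \<sigma> \<in> label_perms q I"
  by (auto simp: label_perms_def permutes_compose permutes_in_image)

lemma label_perms_inv:
  assumes "\<kappa> \<in> label_perms q I"
  shows "inv \<kappa> \<in> label_perms q I"
proof -
  have perm: "\<kappa> permutes I" using assms by (simp add: label_perms_def)
  have "q (inv \<kappa> i) = q i" if "i \<in> I" for i
  proof -
    have "inv \<kappa> i \<in> I" using permutes_inv[OF perm] that by (simp add: permutes_in_image)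
    then have "q (\<kappa> (inv \<kappa> i)) = q (inv \<kappa> i)" using assms by (simp add: label_perms_def)
    then show ?thesis by (simp add: permutes_inverses(1)[OF perm])
  qed
  then show ?thesis using permutes_inv[OF perm] by (simp add: label_perms_def)
qed

lemma finite_label_perms: "finite I \<Longrightarrow> finite (label_perms q I)"
  by (rule finite_subset[OF _ finite_permutations]) (auto simp: label_perms_def)

lemma id_in_label_perms: "id \<in> label_perms q I"
  by (simp add: label_perms_def permutes_id)

lemma sum_label_perms_compose_left:
  assumes \<kappa>: "\<kappa> \<in> label_perms q I"
  shows "(\<Sum>\<sigma>\<in>label_perms q I. f \<sigma>) = (\<Sum>\<sigma>\<in>label_perms q I. f (\<kappa> \<circ> \<sigma>))"
proof -
  have perm: "\<kappa> permutes I" using \<kappa> by (simp add: label_perms_def)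
  have "bij_betw (\<lambda>\<sigma>. \<kappa> \<circ> \<sigma>) (label_perms q I) (label_perms q I)"
  proof (rule bij_betwI[where g = "\<lambda>\<sigma>. inv \<kappa> \<circ> \<sigma>"])
    show "(\<lambda>\<sigma>. \<kappa> \<circ> \<sigma>) \<in> label_perms q I \<rightarrow> label_perms q I"
      using label_perms_compose[OF \<kappa>] by blast
    show "(\<lambda>\<sigma>. inv \<kappa> \<circ> \<sigma>) \<in> label_perms q I \<rightarrow> label_perms q I"
      using label_perms_compose[OF label_perms_inv[OF \<kappa>]] by blast
    show "inv \<kappa> \<circ> (\<kappa> \<circ> \<sigma>) = \<sigma>" for \<sigma>
      by (simp add: o_assoc permutes_inv_o(2)[OF perm])
    show "\<kappa> \<circ> (inv \<kappa> \<circ> \<sigma>) = \<sigma>" for \<sigma>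
      by (simp add: o_assoc permutes_inv_o(1)[OF perm])
  qed
  then show ?thesis by (rule sum.reindex_bij_betw[symmetric])
qed

lemma same_class_order_compose:
  assumes "same_class_order q I s s'" "\<sigma> \<in> label_perms q I"
  shows "same_class_order q I (s \<circ> \<sigma>) (s' \<circ> \<sigma>)"
  using assms by (auto simp: same_class_order_def label_perms_def permutes_in_image)

lemma sum_label_perms_order_invariant:
  fixes \<Phi> :: "('a \<Rightarrow> 'b::linorder) \<Rightarrow> 'c::comm_monoid_add"
  assumes I: "finite I" and s: "inj_on s I" and s': "inj_on s' I"
    and \<Phi>: "\<And>s s'. same_class_order q I s s' \<Longrightarrow> \<Phi> s = \<Phi> s'"
  shows "(\<Sum>\<sigma>\<in>label_perms q I. \<Phi> (s \<circ> \<sigma>)) = (\<Sum>\<sigma>\<in>label_perms q I. \<Phi> (s' \<circ> \<sigma>))"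
proof -
  define \<kappa> where "\<kappa> = rank_match q I s s'"
  have \<kappa>: "\<kappa> \<in> label_perms q I" and align: "same_class_order q I (s' \<circ> \<kappa>) s"
    unfolding \<kappa>_def using I s s' by (rule rank_match_in_label_perms, rule same_class_order_rank_match)
  have "(\<Sum>\<sigma>\<in>label_perms q I. \<Phi> (s' \<circ> \<sigma>)) = (\<Sum>\<sigma>\<in>label_perms q I. \<Phi> (s' \<circ> \<kappa> \<circ> \<sigma>))"
    by (subst sum_label_perms_compose_left[OF \<kappa>]) (simp add: comp_assoc)
  also have "\<dots> = (\<Sum>\<sigma>\<in>label_perms q I. \<Phi> (s \<circ> \<sigma>))"
    using same_class_order_compose[OF align] by (intro sum.cong refl \<Phi>)
  finally show ?thesis by simp
qed

lemma sum_label_perms_eq_sum_perms: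
  fixes \<Phi> :: "('a \<Rightarrow> 'b::linorder) \<Rightarrow> 'c::comm_semiring_1"
  assumes I: "finite I" and s: "inj_on s I" and r: "inj_on r I"
    and \<Phi>: "\<And>s s'. same_class_order q I s s' \<Longrightarrow> \<Phi> s = \<Phi> s'"
  shows "of_nat (card {\<pi>. \<pi> permutes I}) * (\<Sum>\<sigma>\<in>label_perms q I. \<Phi> (s \<circ> \<sigma>))
       = of_nat (card (label_perms q I)) * (\<Sum>\<pi> | \<pi> permutes I. \<Phi> (r \<circ> \<pi>))"
proof -
  let ?P = "{\<pi>. \<pi> permutes I}" and ?W = "label_perms q I"
  have "of_nat (card ?P) * (\<Sum>\<sigma>\<in>?W. \<Phi> (s \<circ> \<sigma>)) = (\<Sum>\<pi>\<in>?P. \<Sum>\<sigma>\<in>?W. \<Phi> (s \<circ> \<sigma>))"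
    by simp
  also have "\<dots> = (\<Sum>\<pi>\<in>?P. \<Sum>\<sigma>\<in>?W. \<Phi> (r \<circ> (\<pi> \<circ> \<sigma>)))"
  proof (rule sum.cong[OF refl])
    fix \<pi> assume "\<pi> \<in> ?P"
    then have "inj_on (r \<circ> \<pi>) I"
      using r by (intro comp_inj_on) (auto simp: permutes_inj_on permutes_image)
    then have "(\<Sum>\<sigma>\<in>?W. \<Phi> (s \<circ> \<sigma>)) = (\<Sum>\<sigma>\<in>?W. \<Phi> (r \<circ> \<pi> \<circ> \<sigma>))"
      using sum_label_perms_order_invariant[where q = q and \<Phi> = \<Phi>, OF I s _ \<Phi>] by simp
    then show "(\<Sum>\<sigma>\<in>?W. \<Phi> (s \<circ> \<sigma>)) = (\<Sum>\<sigma>\<in>?W. \<Phi> (r \<circ> (\<pi> \<circ> \<sigma>)))"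
      by (simp add: comp_assoc)
  qed
  also have "\<dots> = (\<Sum>\<sigma>\<in>?W. \<Sum>\<pi>\<in>?P. \<Phi> (r \<circ> (\<pi> \<circ> \<sigma>)))" by (rule sum.swap)
  also have "\<dots> = (\<Sum>\<sigma>\<in>?W. \<Sum>\<pi>\<in>?P. \<Phi> (r \<circ> \<pi>))"
    by (rule sum.cong[OF refl], rule sum_permutations_compose_right[symmetric])
      (simp add: label_perms_def)
  also have "\<dots> = of_nat (card ?W) * (\<Sum>\<pi>\<in>?P. \<Phi> (r \<circ> \<pi>))" by simp
  finally show ?thesis .
qed

section \<open>Measurability and invariance of product measures\<close>

lemma sets_Collect_card_ge:
  assumes S: "finite S" and P: "\<And>b. b \<in> S \<Longrightarrow> {x\<in>space M. P b x} \<in> sets M"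
  shows "{x\<in>space M. k \<le> card {b\<in>S. P b x}} \<in> sets M"
proof -
  have "{x\<in>space M. k \<le> card {b\<in>S. P b x}} =
      (\<Union>T\<in>{T. T \<subseteq> S \<and> k \<le> card T}. {x\<in>space M. \<forall>b\<in>S. P b x \<longleftrightarrow> b \<in> T})"
  proof (intro equalityI subsetI)
    fix x assume "x \<in> {x\<in>space M. k \<le> card {b\<in>S. P b x}}"
    then show "x \<in> (\<Union>T\<in>{T. T \<subseteq> S \<and> k \<le> card T}. {x\<in>space M. \<forall>b\<in>S. P b x \<longleftrightarrow> b \<in> T})"
      by (intro UN_I[of "{b\<in>S. P b x}"]) auto
  next
    fix x assume "x \<in> (\<Union>T\<in>{T. T \<subseteq> S \<and> k \<le> card T}. {x\<in>space M. \<forall>b\<in>S. P b x \<longleftrightarrow> b \<in> T})"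
    then obtain T where "T \<subseteq> S" "k \<le> card T" "x \<in> space M" "\<forall>b\<in>S. P b x \<longleftrightarrow> b \<in> T" by blast
    moreover from this have "{b\<in>S. P b x} = T" by blast
    ultimately show "x \<in> {x\<in>space M. k \<le> card {b\<in>S. P b x}}" by simp
  qed
  also have "\<dots> \<in> sets M"
  proof (intro sets.finite_UN sets.sets_Collect_finite_All[OF _ S])
    fix b T assume "b \<in> S"
    then have "{x\<in>space M. P b x \<longleftrightarrow> b \<in> T} = (if b \<in> T then {x\<in>space M. P b x} else space M - {x\<in>space M. P b x})"
      by auto
    then show "{x\<in>space M. P b x \<longleftrightarrow> b \<in> T} \<in> sets M" using P[OF \<open>b \<in> S\<close>] by auto
  qed (use S in auto)
  finally show ?thesis .
qed

lemma measurable_order_invariant: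
  fixes f :: "'a \<Rightarrow> 'i \<Rightarrow> real" and \<Phi> :: "('i \<Rightarrow> real) \<Rightarrow> 'b"
  assumes I: "finite I" and f: "\<And>i. i \<in> I \<Longrightarrow> (\<lambda>x. f x i) \<in> borel_measurable M"
    and \<Phi>: "\<And>s s'. (\<forall>i\<in>I. \<forall>j\<in>I. s i \<le> s j \<longleftrightarrow> s' i \<le> s' j) \<Longrightarrow> \<Phi> s = \<Phi> s'"
    and \<Phi>_space: "\<And>s. \<Phi> s \<in> space N"
  shows "(\<lambda>x. \<Phi> (f x)) \<in> M \<rightarrow>\<^sub>M N"
proof -
  define pattern where "pattern s = {p\<in>I \<times> I. s (fst p) \<le> s (snd p)}" for s :: "'i \<Rightarrow> real"
  \<comment> \<open>\<Phi> factors through the finitely many order patterns of its argument on I\<close>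
  have \<Phi>_pattern: "\<Phi> s = \<Phi> (SOME s'. pattern s' = pattern s)" for s
  proof (rule \<Phi>)
    have "pattern (SOME s'. pattern s' = pattern s) = pattern s" by (rule someI[of _ s]) (rule refl)
    then show "\<forall>i\<in>I. \<forall>j\<in>I. s i \<le> s j \<longleftrightarrow> (SOME s'. pattern s' = pattern s) i \<le> (SOME s'. pattern s' = pattern s) j"
      by (auto simp: pattern_def set_eq_iff)
  qed
  have "(\<lambda>x. pattern (f x)) \<in> M \<rightarrow>\<^sub>M count_space (Pow (I \<times> I))"
  proof (subst measurable_count_space_eq2)
    show "finite (Pow (I \<times> I))" using I by simp
    show "(\<lambda>x. pattern (f x)) \<in> space M \<rightarrow> Pow (I \<times> I) \<and>
        (\<forall>P\<in>Pow (I \<times> I). (\<lambda>x. pattern (f x)) -` {P} \<inter> space M \<in> sets M)"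
    proof (intro conjI ballI)
      fix P assume "P \<in> Pow (I \<times> I)"
      then have "(\<lambda>x. pattern (f x)) -` {P} \<inter> space M =
          {x\<in>space M. \<forall>i\<in>I. \<forall>j\<in>I. f x i \<le> f x j \<longleftrightarrow> (i, j) \<in> P}"
        by (auto simp: pattern_def set_eq_iff)
      also have "\<dots> \<in> sets M"
      proof (intro sets.sets_Collect_finite_All[OF _ I])
        fix i j assume "i \<in> I" "j \<in> I"
        note [measurable] = f[OF this(1)] f[OF this(2)]
        show "{x\<in>space M. f x i \<le> f x j \<longleftrightarrow> (i, j) \<in> P} \<in> sets M" by measurable
      qed
      finally show "(\<lambda>x. pattern (f x)) -` {P} \<inter> space M \<in> sets M" .
    qed (auto simp: pattern_def)
  qed
  moreover have "(\<lambda>P. \<Phi> (SOME s. pattern s = P)) \<in> count_space (Pow (I \<times> I)) \<rightarrow>\<^sub>M N"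
    using \<Phi>_space by simp
  ultimately have "(\<lambda>x. \<Phi> (SOME s. pattern s = pattern (f x))) \<in> M \<rightarrow>\<^sub>M N"
    by (rule measurable_compose)
  moreover have "(\<lambda>x. \<Phi> (f x)) = (\<lambda>x. \<Phi> (SOME s. pattern s = pattern (f x)))"
    by (rule ext) (rule \<Phi>_pattern)
  ultimately show ?thesis by simp
qed

lemma measurable_PiM_permute:
  assumes \<sigma>: "\<sigma> permutes I" and M: "\<And>i. i \<in> I \<Longrightarrow> M (\<sigma> i) = M i"
  shows "(\<lambda>x. \<lambda>i\<in>I. x (\<sigma> i)) \<in> PiM I M \<rightarrow>\<^sub>M PiM I M"
proof (rule measurable_restrict)
  fix i assume "i \<in> I"
  then have "(\<lambda>x. x (\<sigma> i)) \<in> PiM I M \<rightarrow>\<^sub>M M (\<sigma> i)"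
    using \<sigma> by (intro measurable_component_singleton) (simp add: permutes_in_image)
  then show "(\<lambda>x. x (\<sigma> i)) \<in> PiM I M \<rightarrow>\<^sub>M M i" using M[OF \<open>i \<in> I\<close>] by simp
qed

lemma distr_PiM_permute:
  assumes \<sigma>: "\<sigma> permutes I" and M: "\<And>i. i \<in> I \<Longrightarrow> M (\<sigma> i) = M i"
    and prob: "\<And>i. i \<in> I \<Longrightarrow> prob_space (M i)"
  shows "distr (PiM I M) (PiM I M) (\<lambda>x. \<lambda>i\<in>I. x (\<sigma> i)) = PiM I M"
proof -
  have "PiM I (\<lambda>i. M (\<sigma> i)) = PiM I M" by (rule PiM_cong) (simp_all add: M)
  moreover have "distr (PiM I M) (PiM I (\<lambda>i. M (\<sigma> i))) (\<lambda>x. \<lambda>i\<in>I. x (\<sigma> i)) = PiM I (\<lambda>i. M (\<sigma> i))"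
    using \<sigma> by (intro distr_PiM_reindex prob) (auto simp: permutes_inj_on permutes_in_image)
  ultimately show ?thesis by simp
qed

section \<open>Ranks of i.i.d. coordinates\<close>

lemma card_many_smaller_le:
  fixes y :: "'a \<Rightarrow> 'b::linorder"
  assumes J: "finite J"
  shows "card {j\<in>J. K \<le> card {b\<in>J - {j}. y b < y j}} \<le> card J - K"
proof -
  let ?S = "{j\<in>J. K \<le> card {b\<in>J - {j}. y b < y j}}"
  show ?thesis
  proof (cases "?S = {}")
    case False
    have "finite ?S" using J by simp
    then obtain j0 where j0: "j0 \<in> ?S" and min: "\<And>j. j \<in> ?S \<Longrightarrow> y j0 \<le> y j"
      using arg_min_if_finite[of ?S y] False by (meson not_le)
    \<comment> \<open>the K elements below the minimum of y on ?S all lie outside ?S\<close>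
    let ?L = "{b\<in>J - {j0}. y b < y j0}"
    have "?S \<inter> ?L = {}" using min by force
    then have "card ?S + card ?L = card (?S \<union> ?L)"
      using J by (intro card_Un_disjoint[symmetric]) auto
    also have "\<dots> \<le> card J" using J by (intro card_mono) auto
    finally have "card ?S + card ?L \<le> card J" .
    moreover have "K \<le> card ?L" using j0 by simp
    ultimately show ?thesis by linarith
  qed (simp only: card.empty zero_le)
qed

definition rank_tail :: "'a measure \<Rightarrow> 'i set \<Rightarrow> ('a \<Rightarrow> real) \<Rightarrow> nat \<Rightarrow> 'i \<Rightarrow> ('i \<Rightarrow> 'a) set" where
  "rank_tail U J Y K j = {x\<in>space (PiM J (\<lambda>_. U)). K \<le> card {b\<in>J - {j}. Y (x b) < Y (x j)}}"

lemma sets_rank_tail: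
  assumes "Y \<in> borel_measurable U" "finite J" "j \<in> J"
  shows "rank_tail U J Y K j \<in> sets (PiM J (\<lambda>_. U))"
  unfolding rank_tail_def
proof (rule sets_Collect_card_ge)
  fix b assume "b \<in> J - {j}"
  then have [measurable]: "(\<lambda>x. Y (x b)) \<in> borel_measurable (PiM J (\<lambda>_. U))"
    "(\<lambda>x. Y (x j)) \<in> borel_measurable (PiM J (\<lambda>_. U))"
    using assms by (auto intro: measurable_compose[OF measurable_component_singleton])
  show "{x\<in>space (PiM J (\<lambda>_. U)). Y (x b) < Y (x j)} \<in> sets (PiM J (\<lambda>_. U))" by measurable
qed (use assms in simp)

lemma emeasure_rank_tail_swap:
  assumes U: "prob_space U" and Y: "Y \<in> borel_measurable U" and J: "finite J" "j \<in> J" "j' \<in> J"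
  shows "emeasure (PiM J (\<lambda>_. U)) (rank_tail U J Y K j') = emeasure (PiM J (\<lambda>_. U)) (rank_tail U J Y K j)"
proof -
  let ?P = "PiM J (\<lambda>_. U)"
  define t where "t = Transposition.transpose j j'"
  define g where "g x = (\<lambda>b\<in>J. x (t b))" for x :: "'b \<Rightarrow> 'a"
  have t: "t permutes J" using J by (simp add: t_def permutes_swap_id)
  have g: "g \<in> ?P \<rightarrow>\<^sub>M ?P" unfolding g_def using t by (rule measurable_PiM_permute) simp
  have "card {b\<in>J - {j}. Y (g x b) < Y (g x j)} = card {c\<in>J - {j'}. Y (x c) < Y (x j')}" for x
  proof -
    have "{b\<in>J - {j}. Y (g x b) < Y (g x j)} = t ` {c\<in>J - {j'}. Y (x c) < Y (x j')}"
      using J permutes_in_image[OF t] by (auto simp: g_def t_def in_transpose_image_iff transpose_eq_iff)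
    moreover have "inj_on t {c\<in>J - {j'}. Y (x c) < Y (x j')}" by (simp add: t_def)
    ultimately show ?thesis by (simp add: card_image)
  qed
  then have "g -` rank_tail U J Y K j \<inter> space ?P = rank_tail U J Y K j'"
    using measurable_space[OF g] by (auto simp: rank_tail_def)
  moreover have "distr ?P ?P g = ?P"
    unfolding g_def by (rule distr_PiM_permute[OF t]) (simp_all add: U)
  ultimately show ?thesis
    using emeasure_distr[OF g sets_rank_tail[OF Y J(1,2)]] by simp
qed

lemma emeasure_rank_tail_le:
  assumes U: "prob_space U" and Y: "Y \<in> borel_measurable U" and J: "finite J" "j \<in> J"
  shows "of_nat (card J) * emeasure (PiM J (\<lambda>_. U)) (rank_tail U J Y K j) \<le> of_nat (card J - K)"
proof -
  let ?P = "PiM J (\<lambda>_. U)"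
  interpret P: prob_space ?P using U by (intro prob_space_PiM)
  have "of_nat (card J) * emeasure ?P (rank_tail U J Y K j) = (\<Sum>j'\<in>J. emeasure ?P (rank_tail U J Y K j'))"
    using emeasure_rank_tail_swap[OF U Y J] by simp
  also have "\<dots> = (\<integral>\<^sup>+x. (\<Sum>j'\<in>J. indicator (rank_tail U J Y K j') x) \<partial>?P)"
    using sets_rank_tail[OF Y J(1)] by (simp add: nn_integral_sum)
  also have "\<dots> \<le> (\<integral>\<^sup>+x. of_nat (card J - K) \<partial>?P)"
  proof (rule nn_integral_mono)
    fix x assume x: "x \<in> space ?P"
    have "(\<Sum>j'\<in>J. indicator (rank_tail U J Y K j') x :: ennreal)
        = of_nat (card {j'\<in>J. K \<le> card {b\<in>J - {j'}. Y (x b) < Y (x j')}})"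
      using x J by (simp add: rank_tail_def indicator_def Int_def)
    also have "\<dots> \<le> of_nat (card J - K)"
      using card_many_smaller_le[OF J(1)] by (rule of_nat_mono)
    finally show "(\<Sum>j'\<in>J. indicator (rank_tail U J Y K j') x) \<le> (of_nat (card J - K) :: ennreal)" .
  qed
  also have "\<dots> = of_nat (card J - K)" by (simp add: P.emeasure_space_1)
  finally show ?thesis .
qed

lemma nn_integral_rank_tail_le:
  fixes U :: "'a measure" and Y :: "'a \<Rightarrow> real"
  assumes U: "prob_space U" and Y: "Y \<in> borel_measurable U"
  shows "of_nat (B + 1) * (\<integral>\<^sup>+y. emeasure (PiM {1..B} (\<lambda>_. U))
      {x\<in>space (PiM {1..B} (\<lambda>_. U)). K \<le> card {b\<in>{1..B}. Y (x b) < Y y}} \<partial>U) \<le> of_nat (B + 1 - K)"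
proof -
  let ?J = "insert 0 {1..B}"
  let ?P = "PiM {1..B} (\<lambda>_. U)"
  define T where "T y = {x\<in>space ?P. K \<le> card {b\<in>{1..B}. Y (x b) < Y y}}" for y
  interpret product_sigma_finite "\<lambda>_ :: nat. U"
    using U by (simp add: product_sigma_finite_def prob_space_imp_sigma_finite)
  have E_sets: "rank_tail U ?J Y K 0 \<in> sets (PiM ?J (\<lambda>_. U))"
    using Y by (rule sets_rank_tail) simp_all
  have T_sets: "T y \<in> sets ?P" for y
    unfolding T_def
  proof (rule sets_Collect_card_ge)
    fix b assume "b \<in> {1..B}"
    then have [measurable]: "(\<lambda>x. Y (x b)) \<in> borel_measurable ?P"
      using Y by (intro measurable_compose[OF measurable_component_singleton])
    show "{x\<in>space ?P. Y (x b) < Y y} \<in> sets ?P" by measurable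
  qed simp
  have "emeasure (PiM ?J (\<lambda>_. U)) (rank_tail U ?J Y K 0)
      = (\<integral>\<^sup>+x. indicator (rank_tail U ?J Y K 0) x \<partial>PiM ?J (\<lambda>_. U))"
    using E_sets by simp
  also have "\<dots> = (\<integral>\<^sup>+y. \<integral>\<^sup>+x. indicator (rank_tail U ?J Y K 0) (x(0 := y)) \<partial>?P \<partial>U)"
    using E_sets by (intro product_nn_integral_insert_rev) auto
  also have "\<dots> = (\<integral>\<^sup>+y. emeasure ?P (T y) \<partial>U)"
  proof (rule nn_integral_cong)
    fix y assume y: "y \<in> space U"
    have "indicator (rank_tail U ?J Y K 0) (x(0 := y)) = (indicator (T y) x :: ennreal)" if "x \<in> space ?P" for x
    proof -
      have "x(0 := y) \<in> space (PiM ?J (\<lambda>_. U))"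
        using that y by (auto simp: space_PiM PiE_iff extensional_def)
      moreover have "{b\<in>?J - {0}. Y ((x(0 := y)) b) < Y ((x(0 := y)) 0)} = {b\<in>{1..B}. Y (x b) < Y y}"
        by auto
      ultimately show ?thesis using that by (simp add: indicator_def rank_tail_def T_def)
    qed
    then have "(\<integral>\<^sup>+x. indicator (rank_tail U ?J Y K 0) (x(0 := y)) \<partial>?P) = (\<integral>\<^sup>+x. indicator (T y) x \<partial>?P)"
      by (rule nn_integral_cong)
    then show "(\<integral>\<^sup>+x. indicator (rank_tail U ?J Y K 0) (x(0 := y)) \<partial>?P) = emeasure ?P (T y)"
      using T_sets by simp
  qed
  finally have "emeasure (PiM ?J (\<lambda>_. U)) (rank_tail U ?J Y K 0) = (\<integral>\<^sup>+y. emeasure ?P (T y) \<partial>U)" .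
  moreover have "of_nat (card ?J) * emeasure (PiM ?J (\<lambda>_. U)) (rank_tail U ?J Y K 0) \<le> of_nat (card ?J - K)"
    using U Y by (rule emeasure_rank_tail_le) auto
  moreover have "card ?J = B + 1" by simp
  ultimately show ?thesis by (simp add: T_def)
qed

section \<open>Gaussian noise separates the scores\<close>

lemma emeasure_std_normal_singleton: "emeasure std_normal {v} = 0"
proof -
  have "AE x in lborel. x \<in> {v} \<longrightarrow> ennreal (std_normal_density x) = 0"
    using AE_lborel_singleton[of v] by (rule eventually_mono) simp
  then have "{v} \<in> null_sets std_normal"
    unfolding std_normal_def by (subst null_sets_density_iff) auto
  then show ?thesis by (rule null_setsD1)
qed

lemma prob_space_std_normal: "prob_space std_normal"
  unfolding std_normal_def using real_dist_normal_dist by (simp add: real_distribution_def)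

lemma sets_std_normal [measurable_cong]: "sets std_normal = sets borel"
  by (simp add: std_normal_def)

lemma AE_PiM_std_normal_neq:
  fixes a :: "'i \<Rightarrow> real"
  assumes I: "finite I" and ij: "i \<in> I" "j \<in> I" "i \<noteq> j" and \<epsilon>: "\<epsilon> \<noteq> 0"
  shows "AE e in PiM I (\<lambda>_. std_normal). a i + \<epsilon> * e i \<noteq> a j + \<epsilon> * e j"
proof -
  let ?M = "PiM I (\<lambda>_. std_normal)" and ?I' = "I - {i}"
  define Z where "Z = {e\<in>space ?M. a i + \<epsilon> * e i = a j + \<epsilon> * e j}"
  interpret product_sigma_finite "\<lambda>_ :: 'i. std_normal"
    by (simp add: product_sigma_finite_def prob_space_std_normal prob_space_imp_sigma_finite)
  have [measurable]: "(\<lambda>e. e k) \<in> borel_measurable ?M" if "k \<in> I" for k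
    using measurable_component_singleton[OF that, of "\<lambda>_. std_normal"]
      measurable_cong_sets[OF refl sets_std_normal, of ?M] by simp
  have Z_sets: "Z \<in> sets ?M" unfolding Z_def using ij by measurable
  have I_eq: "insert i ?I' = I" using ij by auto
  have M_eq: "?M = PiM (insert i ?I') (\<lambda>_. std_normal)" by (simp only: I_eq)
  have "emeasure ?M Z = (\<integral>\<^sup>+e. indicator Z e \<partial>PiM (insert i ?I') (\<lambda>_. std_normal))"
    using Z_sets by (simp only: M_eq nn_integral_indicator)
  also have "\<dots> = (\<integral>\<^sup>+x. \<integral>\<^sup>+y. indicator Z (x(i := y)) \<partial>std_normal \<partial>PiM ?I' (\<lambda>_. std_normal))"
    using Z_sets[unfolded M_eq] I by (intro product_nn_integral_insert) auto
  also have "\<dots> \<le> (\<integral>\<^sup>+x. emeasure std_normal {(a j + \<epsilon> * x j - a i) / \<epsilon>} \<partial>PiM ?I' (\<lambda>_. std_normal))"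
  proof (intro nn_integral_mono)
    fix x
    \<comment> \<open>with the other coordinates fixed, only one value of e i puts e into Z\<close>
    have "indicator Z (x(i := y)) \<le> (indicator {(a j + \<epsilon> * x j - a i) / \<epsilon>} y :: ennreal)" for y
      using ij \<epsilon> by (auto simp: Z_def indicator_def field_simps)
    then have "(\<integral>\<^sup>+y. indicator Z (x(i := y)) \<partial>std_normal)
        \<le> (\<integral>\<^sup>+y. indicator {(a j + \<epsilon> * x j - a i) / \<epsilon>} y \<partial>std_normal)"
      by (intro nn_integral_mono)
    then show "(\<integral>\<^sup>+y. indicator Z (x(i := y)) \<partial>std_normal)
        \<le> emeasure std_normal {(a j + \<epsilon> * x j - a i) / \<epsilon>}"
      by (simp add: sets_std_normal)
  qed
  also have "\<dots> = 0" by (simp add: emeasure_std_normal_singleton)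
  finally have "Z \<in> null_sets ?M" using Z_sets by (intro null_setsI) simp
  then show ?thesis by (rule AE_I') (auto simp: Z_def)
qed

lemma AE_PiM_std_normal_inj:
  fixes a :: "'i \<Rightarrow> real"
  assumes I: "finite I" and \<epsilon>: "\<epsilon> \<noteq> 0"
  shows "AE e in PiM I (\<lambda>_. std_normal). inj_on (\<lambda>i. a i + \<epsilon> * e i) I"
proof -
  have "AE e in PiM I (\<lambda>_. std_normal). \<forall>i\<in>I. \<forall>j\<in>I. i \<noteq> j \<longrightarrow> a i + \<epsilon> * e i \<noteq> a j + \<epsilon> * e j"
    using I \<epsilon> by (intro AE_finite_allI) (auto intro: AE_PiM_std_normal_neq)
  then show ?thesis by (rule AE_mp) (auto intro!: AE_I2 inj_onI)
qed

section \<open>Local statistics at true-null locations\<close>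

lemma true_null_window_subset:
  assumes "\<tau> \<in> true_null Q n h"
  shows "window h \<tau> \<subseteq> {1..n}"
  using assms by (auto simp: true_null_def window_def)

lemma true_null_window_same_law:
  assumes \<tau>: "\<tau> \<in> true_null Q n h" and ij: "i \<in> window h \<tau>" "j \<in> window h \<tau>"
  shows "Q i = Q j"
proof -
  have "Q k = Q (Suc (\<tau> - h))" if "k \<in> window h \<tau>" for k
  proof -
    have "Suc (\<tau> - h) \<le> k" "k \<le> \<tau> + h" using that by (auto simp: window_def)
    then show ?thesis
    proof (induction k rule: dec_induct)
      case (step m)
      \<comment> \<open>no changepoint lies in the window, and m < n because \<tau> + h \<le> n\<close>
      then have "m \<in> window h \<tau>" "1 \<le> m" "m < n" using \<tau> by (auto simp: window_def true_null_def)
      then have "Q m = Q (Suc m)" using \<tau> by (auto simp: true_null_def changepoints_def)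
      with step show ?case by simp
    qed simp
  qed
  then show ?thesis using ij by simp
qed

lemma local_stat_cong:
  assumes "\<And>i j. i \<in> window h \<tau> \<Longrightarrow> j \<in> window h \<tau> \<Longrightarrow> s i \<le> s j \<longleftrightarrow> s' i \<le> s' j"
  shows "local_stat A h s \<tau> = local_stat A h s' \<tau>"
proof -
  have "local_rank h s i \<tau> = local_rank h s' i \<tau>" if "i \<in> window h \<tau>" for i
    unfolding local_rank_def using assms that by (intro arg_cong[where f = card] Collect_cong) auto
  moreover have "set [\<tau> - h + 1..<\<tau> + h + 1] = window h \<tau>" by (auto simp: window_def)
  ultimately show ?thesis
    unfolding local_stat_def rank_vector_def by (intro arg_cong[where f = A] map_cong) auto
qed

lemma local_stat_of_perm_le_Gnorm:
  assumes "\<tau> \<in> {h..n - h}"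
  shows "local_stat A h (\<lambda>i. real (\<pi> i)) \<tau> \<le> Gnorm A n h \<pi>"
proof -
  have "local_stat A h (\<lambda>i. real (\<pi> i)) \<tau> = Gperm A h \<pi> \<tau>"
    by (simp add: local_stat_def Gperm_def rank_vector_def local_rank_def)
  also have "\<dots> \<le> \<bar>Gperm A h \<pi> \<tau>\<bar>" by simp
  also have "\<dots> \<le> Gnorm A n h \<pi>" unfolding Gnorm_def using assms by (intro Max_ge) auto
  finally show ?thesis .
qed

section \<open>The joint model\<close>

lemma sum_eq_card_mult_nn_integral_pmf_of_set:
  assumes "finite S" "S \<noteq> {}"
  shows "(\<Sum>x\<in>S. f x) = of_nat (card S) * (\<integral>\<^sup>+x. f x \<partial>measure_pmf (pmf_of_set S))"
proof -
  have "of_nat (card S) * (\<integral>\<^sup>+x. f x \<partial>measure_pmf (pmf_of_set S)) = of_nat (card S) * ((\<Sum>x\<in>S. f x) / of_nat (card S))"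
    by (simp only: nn_integral_pmf_of_set[OF assms(2,1)])
  also have "\<dots> = (\<Sum>x\<in>S. f x) * of_nat (card S) / of_nat (card S)"
    by (simp only: ennreal_times_divide mult.commute)
  also have "\<dots> = (\<Sum>x\<in>S. f x)"
    using assms by (intro mult_divide_eq_ennreal) simp_all
  finally show ?thesis by (rule sym)
qed

lemma prob_space_uniform_perm: "prob_space (uniform_perm n)"
  by (simp add: uniform_perm_def prob_space_measure_pmf)

locale changepoint_model =
  fixes N :: "'z measure" and Q :: "nat \<Rightarrow> 'z measure"
    and Sf :: "'z \<Rightarrow> (nat \<Rightarrow> 'z) \<Rightarrow> real" and A :: "nat list \<Rightarrow> real"
    and n h B :: nat and \<epsilon> :: real
  assumes laws: "\<And>i. i \<in> {1..n} \<Longrightarrow> prob_space (Q i)"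
    and laws_sets: "\<And>i. i \<in> {1..n} \<Longrightarrow> sets (Q i) = sets N"
    and symmetric: "symmetric_transformation N n Sf"
    and eps: "\<epsilon> \<noteq> 0"
begin

abbreviation "data \<equiv> PiM {1..n} Q"
abbreviation "noise \<equiv> PiM {1..n} (\<lambda>_. std_normal)"
abbreviation "perms \<equiv> PiM {1..B} (\<lambda>_. uniform_perm n)"
abbreviation "\<Omega> \<equiv> joint_space Q n B"

definition score :: "(nat \<Rightarrow> 'z) \<times> (nat \<Rightarrow> real) \<times> (nat \<Rightarrow> nat \<Rightarrow> nat) \<Rightarrow> nat \<Rightarrow> real" where
  "score \<omega> = scores Sf \<epsilon> (fst \<omega>) (fst (snd \<omega>))"

definition exceedances :: "real \<Rightarrow> (nat \<Rightarrow> nat \<Rightarrow> nat) \<Rightarrow> nat" where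
  "exceedances c Ps = card {b\<in>{1..B}. Gnorm A n h (Ps b) < c}"

definition null_rejected :: "nat \<Rightarrow> (nat \<Rightarrow> real) \<Rightarrow> (nat \<Rightarrow> nat \<Rightarrow> nat) \<Rightarrow> bool" where
  "null_rejected K s Ps \<longleftrightarrow> (\<exists>\<tau>\<in>true_null Q n h. K \<le> exceedances (local_stat A h s \<tau>) Ps)"

text \<open>With K = nat \<lceil>(1 - \<alpha>) * real (B + 1)\<rceil> this is the event that T_{n,\<tau>} > t_{\<alpha>,B} at some
  \<tau> \<in> G (lemma perm_threshold_less_iff).\<close>
definition false_rejection :: "nat \<Rightarrow> ((nat \<Rightarrow> 'z) \<times> (nat \<Rightarrow> real) \<times> (nat \<Rightarrow> nat \<Rightarrow> nat)) set" where
  "false_rejection K = {\<omega>\<in>space \<Omega>. null_rejected K (score \<omega>) (snd (snd \<omega>))}"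

lemma joint_space_eq: "\<Omega> = data \<Otimes>\<^sub>M (noise \<Otimes>\<^sub>M perms)"
  by (simp add: joint_space_def)

lemma prob_spaces: "prob_space data" "prob_space noise" "prob_space perms" "prob_space (noise \<Otimes>\<^sub>M perms)"
  "prob_space \<Omega>"
proof -
  show "prob_space data" using laws by (rule prob_space_PiM)
  show "prob_space noise" using prob_space_std_normal by (rule prob_space_PiM)
  show "prob_space perms" using prob_space_uniform_perm by (rule prob_space_PiM)
  with \<open>prob_space noise\<close> show "prob_space (noise \<Otimes>\<^sub>M perms)" by (rule prob_space_pair)
  with \<open>prob_space data\<close> show "prob_space \<Omega>" unfolding joint_space_eq by (rule prob_space_pair)
qed

lemma measurable_perms_component: "(\<lambda>\<omega>. snd (snd \<omega>)) \<in> \<Omega> \<rightarrow>\<^sub>M perms"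
  unfolding joint_space_eq by measurable

lemma measurable_score:
  assumes i: "i \<in> {1..n}"
  shows "(\<lambda>\<omega>. score \<omega> i) \<in> borel_measurable \<Omega>"
proof -
  have "(\<lambda>D. D i) \<in> data \<rightarrow>\<^sub>M Q i" using i by (rule measurable_component_singleton)
  moreover have "data \<rightarrow>\<^sub>M Q i = data \<rightarrow>\<^sub>M N" by (rule measurable_cong_sets[OF refl laws_sets[OF i]])
  ultimately have "(\<lambda>D. D i) \<in> data \<rightarrow>\<^sub>M N" by simp
  moreover have "(\<lambda>D. D) \<in> data \<rightarrow>\<^sub>M PiM {1..n} (\<lambda>_. N)"
    by (rule measurable_ident_sets) (rule sets_PiM_cong, simp_all add: laws_sets)
  ultimately have "(\<lambda>D. (D i, D)) \<in> data \<rightarrow>\<^sub>M N \<Otimes>\<^sub>M PiM {1..n} (\<lambda>_. N)" by (rule measurable_Pair)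
  moreover have "(\<lambda>(z, D). Sf z D) \<in> borel_measurable (N \<Otimes>\<^sub>M PiM {1..n} (\<lambda>_. N))"
    using symmetric by (simp add: symmetric_transformation_def)
  ultimately have "(\<lambda>(z, D). Sf z D) \<circ> (\<lambda>D. (D i, D)) \<in> borel_measurable data"
    by (rule measurable_comp)
  then have [measurable]: "(\<lambda>D. Sf (D i) D) \<in> borel_measurable data" by (simp add: comp_def)
  have [measurable]: "(\<lambda>e. e i) \<in> borel_measurable noise"
    using measurable_component_singleton[OF i, of "\<lambda>_. std_normal"]
      measurable_cong_sets[OF refl sets_std_normal, of noise] by simp
  show ?thesis unfolding score_def scores_def joint_space_eq by measurable
qed

lemma measurable_local_stat_score:
  assumes "\<tau> \<in> true_null Q n h"
  shows "(\<lambda>\<omega>. local_stat A h (score \<omega>) \<tau>) \<in> borel_measurable \<Omega>"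
proof (rule measurable_order_invariant[where I = "window h \<tau>" and f = score and \<Phi> = "\<lambda>s. local_stat A h s \<tau>"])
  show "(\<lambda>\<omega>. score \<omega> i) \<in> borel_measurable \<Omega>" if "i \<in> window h \<tau>" for i
    using that true_null_window_subset[OF assms] by (intro measurable_score) auto
  show "local_stat A h s \<tau> = local_stat A h s' \<tau>"
    if "\<forall>i\<in>window h \<tau>. \<forall>j\<in>window h \<tau>. s i \<le> s j \<longleftrightarrow> s' i \<le> s' j" for s s'
    using that by (intro local_stat_cong) auto
qed (simp_all add: window_def)

lemma sets_exceedances_ge:
  assumes "f \<in> borel_measurable M" "g \<in> M \<rightarrow>\<^sub>M perms"
  shows "{x\<in>space M. K \<le> exceedances (f x) (g x)} \<in> sets M"
  unfolding exceedances_def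
proof (rule sets_Collect_card_ge)
  fix b assume b: "b \<in> {1..B}"
  have "(\<lambda>Ps. Gnorm A n h (Ps b)) \<in> borel_measurable perms"
    using b by (intro measurable_compose[OF measurable_component_singleton]) (simp_all add: uniform_perm_def)
  with assms have [measurable]: "(\<lambda>x. Gnorm A n h (g x b)) \<in> borel_measurable M" "f \<in> borel_measurable M"
    by (auto intro: measurable_compose)
  show "{x\<in>space M. Gnorm A n h (g x b) < f x} \<in> sets M" by measurable
qed simp

lemma sets_false_rejection: "false_rejection K \<in> sets \<Omega>"
  unfolding false_rejection_def null_rejected_def
proof (rule sets.sets_Collect_finite_Ex)
  fix \<tau> assume "\<tau> \<in> true_null Q n h"
  then show "{\<omega>\<in>space \<Omega>. K \<le> exceedances (local_stat A h (score \<omega>) \<tau>) (snd (snd \<omega>))} \<in> sets \<Omega>"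
    by (intro sets_exceedances_ge measurable_local_stat_score measurable_perms_component)
next
  show "finite (true_null Q n h)" by (rule finite_subset[of _ "{h..n - h}"]) (auto simp: true_null_def)
qed

definition permute_sample ::
  "(nat \<Rightarrow> nat) \<Rightarrow> (nat \<Rightarrow> 'z) \<times> (nat \<Rightarrow> real) \<times> (nat \<Rightarrow> nat \<Rightarrow> nat)
    \<Rightarrow> (nat \<Rightarrow> 'z) \<times> (nat \<Rightarrow> real) \<times> (nat \<Rightarrow> nat \<Rightarrow> nat)" where
  "permute_sample \<sigma> \<omega> = (\<lambda>i\<in>{1..n}. fst \<omega> (\<sigma> i), \<lambda>i\<in>{1..n}. fst (snd \<omega>) (\<sigma> i), snd (snd \<omega>))"

lemma measurable_permute_sample:
  assumes \<sigma>: "\<sigma> \<in> label_perms Q {1..n}"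
  shows "permute_sample \<sigma> \<in> \<Omega> \<rightarrow>\<^sub>M \<Omega>"
proof -
  have perm: "\<sigma> permutes {1..n}" and Q: "\<And>i. i \<in> {1..n} \<Longrightarrow> Q (\<sigma> i) = Q i"
    using \<sigma> by (auto simp: label_perms_def)
  have [measurable]: "(\<lambda>x. \<lambda>i\<in>{1..n}. x (\<sigma> i)) \<in> data \<rightarrow>\<^sub>M data"
    "(\<lambda>x. \<lambda>i\<in>{1..n}. x (\<sigma> i)) \<in> noise \<rightarrow>\<^sub>M noise"
    using perm Q by (auto intro: measurable_PiM_permute)
  show ?thesis unfolding permute_sample_def joint_space_eq by measurable
qed

lemma distr_permute_sample:
  assumes \<sigma>: "\<sigma> \<in> label_perms Q {1..n}"
  shows "distr \<Omega> \<Omega> (permute_sample \<sigma>) = \<Omega>"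
proof -
  define f where "f D = (\<lambda>i\<in>{1..n}. D (\<sigma> i))" for D :: "nat \<Rightarrow> 'z"
  define g where "g e = (\<lambda>i\<in>{1..n}. e (\<sigma> i))" for e :: "nat \<Rightarrow> real"
  have perm: "\<sigma> permutes {1..n}" and Q: "\<And>i. i \<in> {1..n} \<Longrightarrow> Q (\<sigma> i) = Q i"
    using \<sigma> by (auto simp: label_perms_def)
  have f: "f \<in> data \<rightarrow>\<^sub>M data" "distr data data f = data"
    unfolding f_def using perm Q laws by (auto intro: measurable_PiM_permute distr_PiM_permute)
  have g: "g \<in> noise \<rightarrow>\<^sub>M noise" "distr noise noise g = noise"
    unfolding g_def using perm prob_space_std_normal
    by (auto intro: measurable_PiM_permute distr_PiM_permute)
  interpret perms: prob_space perms by (rule prob_spaces)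
  interpret rest: prob_space "noise \<Otimes>\<^sub>M perms" by (rule prob_spaces)
  have "distr noise noise g \<Otimes>\<^sub>M distr perms perms (\<lambda>x. x)
      = distr (noise \<Otimes>\<^sub>M perms) (noise \<Otimes>\<^sub>M perms) (\<lambda>(x, y). (g x, y))"
    using perms.sigma_finite_measure_axioms
    by (intro pair_measure_distr[OF g(1) measurable_ident_sets[OF refl]]) simp
  then have rest_eq: "distr (noise \<Otimes>\<^sub>M perms) (noise \<Otimes>\<^sub>M perms) (\<lambda>(x, y). (g x, y)) = noise \<Otimes>\<^sub>M perms"
    using g(2) by simp
  have "(\<lambda>(x, y). (g x, y)) \<in> noise \<Otimes>\<^sub>M perms \<rightarrow>\<^sub>M noise \<Otimes>\<^sub>M perms"
    using g(1) by measurable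
  then have "distr data data f \<Otimes>\<^sub>M distr (noise \<Otimes>\<^sub>M perms) (noise \<Otimes>\<^sub>M perms) (\<lambda>(x, y). (g x, y))
      = distr \<Omega> \<Omega> (\<lambda>(x, y). (f x, (\<lambda>(x, y). (g x, y)) y))"
    unfolding joint_space_eq using f(1) rest.sigma_finite_measure_axioms rest_eq
    by (intro pair_measure_distr) simp_all
  moreover have "(\<lambda>(x, y). (f x, (\<lambda>(x, y). (g x, y)) y)) = permute_sample \<sigma>"
    by (simp add: fun_eq_iff permute_sample_def f_def g_def split_beta)
  ultimately show ?thesis using f(2) rest_eq by (simp add: joint_space_eq)
qed

lemma score_permute_sample:
  assumes \<sigma>: "\<sigma> \<in> label_perms Q {1..n}" and \<omega>: "\<omega> \<in> space \<Omega>" and i: "i \<in> {1..n}"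
  shows "score (permute_sample \<sigma> \<omega>) i = score \<omega> (\<sigma> i)"
proof -
  have perm: "\<sigma> permutes {1..n}" using \<sigma> by (simp add: label_perms_def)
  have ext: "fst \<omega> \<in> extensional {1..n}"
    using \<omega> by (auto simp: joint_space_eq space_pair_measure space_PiM PiE_def)
  have restrict_eq: "(\<lambda>i\<in>{1..n}. fst \<omega> (\<sigma> i)) = fst \<omega> \<circ> \<sigma>"
  proof
    fix k
    \<comment> \<open>outside {1..n} both sides are undefined, since \<sigma> fixes those points\<close>
    show "(\<lambda>i\<in>{1..n}. fst \<omega> (\<sigma> i)) k = (fst \<omega> \<circ> \<sigma>) k"
    proof (cases "k \<in> {1..n}")
      case False
      have "\<sigma> k = k" using perm False by (rule permutes_not_in)
      with False show ?thesis using extensional_arb[OF ext False] by simp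
    qed simp
  qed
  have "Sf z (fst \<omega> \<circ> \<sigma>) = Sf z (fst \<omega>)" for z
    using symmetric perm by (simp add: symmetric_transformation_def)
  then show ?thesis
    using i unfolding score_def scores_def permute_sample_def restrict_eq by simp
qed

lemma null_rejected_cong:
  assumes "same_class_order Q {1..n} s s'"
  shows "null_rejected K s Ps \<longleftrightarrow> null_rejected K s' Ps"
proof -
  have "local_stat A h s \<tau> = local_stat A h s' \<tau>" if "\<tau> \<in> true_null Q n h" for \<tau>
  proof (rule local_stat_cong)
    fix i j assume ij: "i \<in> window h \<tau>" "j \<in> window h \<tau>"
    then have "i \<in> {1..n}" "j \<in> {1..n}" using true_null_window_subset[OF that] by auto
    moreover have "Q i = Q j" using true_null_window_same_law[OF that ij] .
    ultimately show "s i \<le> s j \<longleftrightarrow> s' i \<le> s' j"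
      using assms unfolding same_class_order_def by blast
  qed
  then show ?thesis by (simp add: null_rejected_def)
qed

definition permuted_rejection ::
  "nat \<Rightarrow> (nat \<Rightarrow> nat) \<Rightarrow> ((nat \<Rightarrow> 'z) \<times> (nat \<Rightarrow> real) \<times> (nat \<Rightarrow> nat \<Rightarrow> nat)) set" where
  "permuted_rejection K \<sigma> = {\<omega>\<in>space \<Omega>. null_rejected K (score \<omega> \<circ> \<sigma>) (snd (snd \<omega>))}"

lemma vimage_permute_sample_false_rejection:
  assumes \<sigma>: "\<sigma> \<in> label_perms Q {1..n}"
  shows "permute_sample \<sigma> -` false_rejection K \<inter> space \<Omega> = permuted_rejection K \<sigma>"
proof -
  have "permute_sample \<sigma> \<omega> \<in> false_rejection K \<longleftrightarrow> null_rejected K (score \<omega> \<circ> \<sigma>) (snd (snd \<omega>))"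
    if \<omega>: "\<omega> \<in> space \<Omega>" for \<omega>
  proof -
    have "same_class_order Q {1..n} (score (permute_sample \<sigma> \<omega>)) (score \<omega> \<circ> \<sigma>)"
      using score_permute_sample[OF \<sigma> \<omega>] by (simp add: same_class_order_def)
    then show ?thesis
      using measurable_space[OF measurable_permute_sample[OF \<sigma>] \<omega>]
      by (simp add: false_rejection_def null_rejected_cong permute_sample_def)
  qed
  then show ?thesis by (simp add: permuted_rejection_def set_eq_iff conj_commute cong: conj_cong)
qed

lemma sets_permuted_rejection:
  assumes \<sigma>: "\<sigma> \<in> label_perms Q {1..n}"
  shows "permuted_rejection K \<sigma> \<in> sets \<Omega>"
  unfolding vimage_permute_sample_false_rejection[OF \<sigma>, symmetric]
  by (rule measurable_sets[OF measurable_permute_sample[OF \<sigma>] sets_false_rejection])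

lemma emeasure_false_rejection_permuted:
  assumes \<sigma>: "\<sigma> \<in> label_perms Q {1..n}"
  shows "emeasure \<Omega> (false_rejection K) = emeasure \<Omega> (permuted_rejection K \<sigma>)"
  using emeasure_distr[OF measurable_permute_sample[OF \<sigma>] sets_false_rejection]
  by (simp add: distr_permute_sample[OF \<sigma>] vimage_permute_sample_false_rejection[OF \<sigma>])

lemma sets_inj_score: "{\<omega>\<in>space \<Omega>. inj_on (score \<omega>) {1..n}} \<in> sets \<Omega>"
proof -
  have "(\<lambda>\<omega>. inj_on (score \<omega>) {1..n}) \<in> \<Omega> \<rightarrow>\<^sub>M count_space UNIV"
  proof (rule measurable_order_invariant[where I = "{1..n}" and f = score and \<Phi> = "\<lambda>s. inj_on s {1..n}"])
    fix s s' :: "nat \<Rightarrow> real" assume "\<forall>i\<in>{1..n}. \<forall>j\<in>{1..n}. s i \<le> s j \<longleftrightarrow> s' i \<le> s' j"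
    then have "s i = s j \<longleftrightarrow> s' i = s' j" if "i \<in> {1..n}" "j \<in> {1..n}" for i j
      using that by (metis order.antisym order.refl)
    then show "inj_on s {1..n} \<longleftrightarrow> inj_on s' {1..n}" unfolding inj_on_def by blast
  qed (simp_all add: measurable_score)
  then show ?thesis by (simp add: pred_def[symmetric])
qed

lemma AE_inj_score: "AE \<omega> in \<Omega>. inj_on (score \<omega>) {1..n}"
proof -
  interpret data: prob_space data by (rule prob_spaces)
  interpret perms: prob_space perms by (rule prob_spaces)
  interpret rest: prob_space "noise \<Otimes>\<^sub>M perms" by (rule prob_spaces)
  interpret pair_sigma_finite data "noise \<Otimes>\<^sub>M perms" ..
  have inner: "AE y in noise \<Otimes>\<^sub>M perms. inj_on (score (D, y)) {1..n}" for D
  proof -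
    have "AE e in noise. inj_on (\<lambda>i. Sf (D i) D + \<epsilon> * e i) {1..n}"
      using eps by (intro AE_PiM_std_normal_inj) simp_all
    then have "AE y in noise \<Otimes>\<^sub>M perms. inj_on (\<lambda>i. Sf (D i) D + \<epsilon> * fst y i) {1..n}"
      by (intro AE_distrD[OF measurable_fst]) (simp only: perms.distr_pair_fst)
    moreover have "score (D, y) = (\<lambda>i. Sf (D i) D + \<epsilon> * fst y i)" for y
      by (simp add: fun_eq_iff score_def scores_def)
    ultimately show ?thesis by simp
  qed
  then have "AE D in data. AE y in noise \<Otimes>\<^sub>M perms. inj_on (score (D, y)) {1..n}" by simp
  with sets_inj_score show ?thesis unfolding joint_space_eq by (rule AE_pair_measure)
qed

lemma nn_integral_perms_marginal:
  assumes f: "f \<in> borel_measurable perms"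
  shows "(\<integral>\<^sup>+\<omega>. f (snd (snd \<omega>)) \<partial>\<Omega>) = integral\<^sup>N perms f"
proof -
  interpret data: prob_space data by (rule prob_spaces)
  interpret noise: prob_space noise by (rule prob_spaces)
  interpret perms: prob_space perms by (rule prob_spaces)
  interpret rest: prob_space "noise \<Otimes>\<^sub>M perms" by (rule prob_spaces)
  have "(\<lambda>\<omega>. f (snd (snd \<omega>))) \<in> borel_measurable (data \<Otimes>\<^sub>M (noise \<Otimes>\<^sub>M perms))"
    using f by measurable
  from rest.nn_integral_fst[OF this]
  have "(\<integral>\<^sup>+\<omega>. f (snd (snd \<omega>)) \<partial>\<Omega>) = (\<integral>\<^sup>+D. \<integral>\<^sup>+y. f (snd y) \<partial>(noise \<Otimes>\<^sub>M perms) \<partial>data)"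
    by (simp only: joint_space_eq snd_conv)
  also have "\<dots> = (\<integral>\<^sup>+D. \<integral>\<^sup>+e. \<integral>\<^sup>+Ps. f Ps \<partial>perms \<partial>noise \<partial>data)"
  proof -
    have "(\<lambda>y. f (snd y)) \<in> borel_measurable (noise \<Otimes>\<^sub>M perms)" using f by measurable
    from perms.nn_integral_fst[OF this] show ?thesis by (simp only: snd_conv)
  qed
  also have "\<dots> = integral\<^sup>N perms f"
    using data.emeasure_space_1 noise.emeasure_space_1 by simp
  finally show ?thesis .
qed

definition exceedance_event :: "nat \<Rightarrow> (nat \<Rightarrow> nat) \<Rightarrow> (nat \<Rightarrow> nat \<Rightarrow> nat) set" where
  "exceedance_event K \<pi> = {Ps\<in>space perms. K \<le> exceedances (Gnorm A n h \<pi>) Ps}"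

lemma sets_exceedance_event: "exceedance_event K \<pi> \<in> sets perms"
  unfolding exceedance_event_def by (intro sets_exceedances_ge) simp_all

lemma null_rejected_perm_imp_exceedance:
  assumes "null_rejected K (\<lambda>i. real (\<pi> i)) Ps"
  shows "K \<le> exceedances (Gnorm A n h \<pi>) Ps"
proof -
  obtain \<tau> where \<tau>: "\<tau> \<in> true_null Q n h" and K: "K \<le> exceedances (local_stat A h (\<lambda>i. real (\<pi> i)) \<tau>) Ps"
    using assms by (auto simp: null_rejected_def)
  have "local_stat A h (\<lambda>i. real (\<pi> i)) \<tau> \<le> Gnorm A n h \<pi>"
    using \<tau> by (intro local_stat_of_perm_le_Gnorm) (simp add: true_null_def)
  then have "exceedances (local_stat A h (\<lambda>i. real (\<pi> i)) \<tau>) Ps \<le> exceedances (Gnorm A n h \<pi>) Ps"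
    unfolding exceedances_def by (intro card_mono) auto
  with K show ?thesis by simp
qed

lemma sum_permuted_rejection_le:
  assumes \<omega>: "\<omega> \<in> space \<Omega>" and inj: "inj_on (score \<omega>) {1..n}"
  shows "of_nat (card {\<pi>. \<pi> permutes {1..n}})
      * (\<Sum>\<sigma>\<in>label_perms Q {1..n}. indicator (permuted_rejection K \<sigma>) \<omega>)
    \<le> (of_nat (card (label_perms Q {1..n}))
      * (\<Sum>\<pi> | \<pi> permutes {1..n}. indicator (exceedance_event K \<pi>) (snd (snd \<omega>))) :: ennreal)"
proof -
  let ?W = "label_perms Q {1..n}" and ?P = "{\<pi>. \<pi> permutes {1..n}}" and ?Ps = "snd (snd \<omega>)"
  have "(\<Sum>\<sigma>\<in>?W. indicator (permuted_rejection K \<sigma>) \<omega> :: ennreal)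
      = (\<Sum>\<sigma>\<in>?W. of_bool (null_rejected K (score \<omega> \<circ> \<sigma>) ?Ps))"
    using \<omega> by (simp add: permuted_rejection_def indicator_def)
  then have "of_nat (card ?P) * (\<Sum>\<sigma>\<in>?W. indicator (permuted_rejection K \<sigma>) \<omega>)
      = of_nat (card ?P) * (\<Sum>\<sigma>\<in>?W. of_bool (null_rejected K (score \<omega> \<circ> \<sigma>) ?Ps) :: ennreal)"
    by (simp only:)
  also have "\<dots> = of_nat (card ?W) * (\<Sum>\<pi>\<in>?P. of_bool (null_rejected K (real \<circ> \<pi>) ?Ps))"
  proof (rule sum_label_perms_eq_sum_perms[where \<Phi> = "\<lambda>s. of_bool (null_rejected K s ?Ps)"])
    show "inj_on real {1..n}" by (simp add: inj_on_def)
    show "of_bool (null_rejected K s ?Ps) = (of_bool (null_rejected K s' ?Ps) :: ennreal)"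
      if "same_class_order Q {1..n} s s'" for s s'
      using null_rejected_cong[OF that] by simp
  qed (use inj in simp_all)
  also have "\<dots> \<le> of_nat (card ?W) * (\<Sum>\<pi>\<in>?P. indicator (exceedance_event K \<pi>) ?Ps)"
  proof (intro mult_left_mono sum_mono)
    fix \<pi>
    have "?Ps \<in> space perms" using measurable_space[OF measurable_perms_component \<omega>] .
    then show "of_bool (null_rejected K (real \<circ> \<pi>) ?Ps) \<le> (indicator (exceedance_event K \<pi>) ?Ps :: ennreal)"
      using null_rejected_perm_imp_exceedance[of K \<pi> ?Ps]
      by (auto simp: exceedance_event_def indicator_def comp_def)
  qed simp
  finally show ?thesis .
qed

lemma card_mult_emeasure_false_rejection_le:
  "of_nat (card {\<pi>. \<pi> permutes {1..n}}) * (of_nat (card (label_perms Q {1..n})) * emeasure \<Omega> (false_rejection K))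
    \<le> of_nat (card (label_perms Q {1..n})) * (\<Sum>\<pi> | \<pi> permutes {1..n}. emeasure perms (exceedance_event K \<pi>))"
proof -
  let ?W = "label_perms Q {1..n}" and ?P = "{\<pi>. \<pi> permutes {1..n}}"
  let ?R = "permuted_rejection K" and ?E = "exceedance_event K"
  have R_measurable: "(\<lambda>\<omega>. \<Sum>\<sigma>\<in>?W. indicator (?R \<sigma>) \<omega> :: ennreal) \<in> borel_measurable \<Omega>"
    using sets_permuted_rejection by (intro borel_measurable_sum) simp
  have E_measurable: "(\<lambda>\<omega>. indicator (?E \<pi>) (snd (snd \<omega>)) :: ennreal) \<in> borel_measurable \<Omega>" for \<pi>
    by (rule measurable_compose[OF measurable_perms_component borel_measurable_indicator[OF sets_exceedance_event]])
  have "of_nat (card ?W) * emeasure \<Omega> (false_rejection K) = (\<Sum>\<sigma>\<in>?W. emeasure \<Omega> (false_rejection K))"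
    by simp
  also have "\<dots> = (\<Sum>\<sigma>\<in>?W. emeasure \<Omega> (?R \<sigma>))"
    using emeasure_false_rejection_permuted by (intro sum.cong) auto
  also have "\<dots> = (\<integral>\<^sup>+\<omega>. (\<Sum>\<sigma>\<in>?W. indicator (?R \<sigma>) \<omega>) \<partial>\<Omega>)"
    using sets_permuted_rejection by (subst nn_integral_sum) simp_all
  finally have "of_nat (card ?P) * (of_nat (card ?W) * emeasure \<Omega> (false_rejection K))
      = of_nat (card ?P) * (\<integral>\<^sup>+\<omega>. (\<Sum>\<sigma>\<in>?W. indicator (?R \<sigma>) \<omega>) \<partial>\<Omega>)"
    by (simp only:)
  also have "\<dots> = (\<integral>\<^sup>+\<omega>. of_nat (card ?P) * (\<Sum>\<sigma>\<in>?W. indicator (?R \<sigma>) \<omega>) \<partial>\<Omega>)"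
    by (rule nn_integral_cmult[OF R_measurable, symmetric])
  also have "\<dots> \<le> (\<integral>\<^sup>+\<omega>. of_nat (card ?W) * (\<Sum>\<pi>\<in>?P. indicator (?E \<pi>) (snd (snd \<omega>))) \<partial>\<Omega>)"
    using AE_inj_score by (intro nn_integral_mono_AE, elim AE_mp) (blast intro: AE_I2 sum_permuted_rejection_le)
  also have "\<dots> = of_nat (card ?W) * (\<integral>\<^sup>+\<omega>. (\<Sum>\<pi>\<in>?P. indicator (?E \<pi>) (snd (snd \<omega>))) \<partial>\<Omega>)"
    using E_measurable by (intro nn_integral_cmult borel_measurable_sum)
  also have "\<dots> = of_nat (card ?W) * (\<Sum>\<pi>\<in>?P. emeasure perms (?E \<pi>))"
    using E_measurable sets_exceedance_event
    by (simp add: nn_integral_sum nn_integral_perms_marginal[of "indicator (?E _)"])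
  finally show ?thesis .
qed

lemma emeasure_false_rejection_le:
  "emeasure \<Omega> (false_rejection K) \<le> (\<integral>\<^sup>+\<pi>. emeasure perms (exceedance_event K \<pi>) \<partial>uniform_perm n)"
proof -
  let ?W = "label_perms Q {1..n}" and ?P = "{\<pi>. \<pi> permutes {1..n}}"
  have W: "card ?W \<noteq> 0"
    using finite_label_perms[of "{1..n}" Q] id_in_label_perms[of Q "{1..n}"] by (auto simp: card_eq_0_iff)
  have P: "finite ?P" "?P \<noteq> {}"
    using finite_permutations[of "{1..n}"] by (auto intro!: exI[of _ id])
  then have "card ?P \<noteq> 0" by simp
  moreover have "of_nat (card ?P) * (of_nat (card ?W) * emeasure \<Omega> (false_rejection K))
      \<le> of_nat (card ?P) * (of_nat (card ?W)
          * (\<integral>\<^sup>+\<pi>. emeasure perms (exceedance_event K \<pi>) \<partial>uniform_perm n))"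
    using card_mult_emeasure_false_rejection_le[of K]
    unfolding uniform_perm_def sum_eq_card_mult_nn_integral_pmf_of_set[OF P] by (simp add: mult.left_commute)
  ultimately show ?thesis
    using W by (simp add: ennreal_mult_le_mult_iff)
qed

lemma threshold_exceedance_imp_false_rejection:
  assumes "\<alpha> < 1" "\<omega> \<in> space \<Omega>" "\<tau> \<in> true_null Q n h"
    and "perm_threshold A n h \<alpha> B (snd (snd \<omega>)) < ereal (local_stat A h (score \<omega>) \<tau>)"
  shows "\<omega> \<in> false_rejection (nat \<lceil>(1 - \<alpha>) * real (B + 1)\<rceil>)"
  using assms perm_threshold_less_iff[OF assms(1)]
  by (auto simp: false_rejection_def null_rejected_def exceedances_def)

lemma measure_false_rejection_le:
  "measure \<Omega> (false_rejection K) \<le> real (B + 1 - K) / real (B + 1)"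
proof -
  interpret \<Omega>: prob_space \<Omega> by (rule prob_spaces)
  have "of_nat (B + 1) * emeasure \<Omega> (false_rejection K)
      \<le> of_nat (B + 1) * (\<integral>\<^sup>+\<pi>. emeasure perms (exceedance_event K \<pi>) \<partial>uniform_perm n)"
    by (intro mult_left_mono emeasure_false_rejection_le) simp
  also have "\<dots> \<le> of_nat (B + 1 - K)"
    unfolding exceedance_event_def exceedances_def
    by (rule nn_integral_rank_tail_le[OF prob_space_uniform_perm]) (simp add: uniform_perm_def)
  finally have "ennreal (real (B + 1)) * ennreal (measure \<Omega> (false_rejection K)) \<le> ennreal (real (B + 1 - K))"
    by (simp only: \<Omega>.emeasure_eq_measure ennreal_of_nat_eq_real_of_nat)
  then have "ennreal (real (B + 1) * measure \<Omega> (false_rejection K)) \<le> ennreal (real (B + 1 - K))"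
    by (simp only: ennreal_mult[symmetric] of_nat_0_le_iff measure_nonneg)
  then have "real (B + 1) * measure \<Omega> (false_rejection K) \<le> real (B + 1 - K)"
    by (subst (asm) ennreal_le_iff) simp_all
  then show ?thesis by (subst pos_le_divide_eq) (simp_all add: mult.commute)
qed

lemma measure_le_level_if_subset_false_rejection:
  assumes "E \<subseteq> false_rejection (nat \<lceil>(1 - \<alpha>) * real (B + 1)\<rceil>)" and "0 \<le> \<alpha>"
  shows "measure \<Omega> E \<le> \<alpha>"
proof -
  interpret \<Omega>: prob_space \<Omega> by (rule prob_spaces)
  have "measure \<Omega> E \<le> measure \<Omega> (false_rejection (nat \<lceil>(1 - \<alpha>) * real (B + 1)\<rceil>))"
    using assms(1) sets_false_rejection by (rule \<Omega>.finite_measure_mono)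
  also have "\<dots> \<le> real (B + 1 - nat \<lceil>(1 - \<alpha>) * real (B + 1)\<rceil>) / real (B + 1)"
    by (rule measure_false_rejection_le)
  also have "\<dots> \<le> \<alpha>"
    using diff_nat_ceiling_le[OF assms(2), of "B + 1"] by (subst pos_divide_le_eq) simp_all
  finally show ?thesis .
qed

end

theorem theorem5:
  fixes N :: "'z measure" and Q :: "nat \<Rightarrow> 'z measure"
    and Sf :: "'z \<Rightarrow> (nat \<Rightarrow> 'z) \<Rightarrow> real" and A :: "nat list \<Rightarrow> real"
    and That :: "(nat \<Rightarrow> 'z) \<times> (nat \<Rightarrow> real) \<times> (nat \<Rightarrow> nat \<Rightarrow> nat) \<Rightarrow> nat set"
    and n h B :: nat and \<alpha> \<epsilon> :: real
  assumes laws: "\<And>i. i \<in> {1..n} \<Longrightarrow> prob_space (Q i)"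
    and laws_sets: "\<And>i. i \<in> {1..n} \<Longrightarrow> sets (Q i) = sets N"
    and sym: "symmetric_transformation N n Sf"
    and A_nonneg: "\<And>xs. A xs \<ge> 0"
    and h: "1 \<le> h" "2 * h \<le> n"
    and eps: "\<epsilon> > 0"
    and alpha: "0 < \<alpha>" "\<alpha> < 1"
    and B: "B \<ge> 1"
    and That_range: "\<And>\<omega>. That \<omega> \<subseteq> {h..n - h}"
  shows "measure (joint_space Q n B)
           {\<omega> \<in> space (joint_space Q n B).
              \<exists>\<tau> \<in> That \<omega>. \<tau> \<in> true_null Q n h \<and>
                ereal (local_stat A h (scores Sf \<epsilon> (fst \<omega>) (fst (snd \<omega>))) \<tau>)
                  > perm_threshold A n h \<alpha> B (snd (snd \<omega>))}
         \<le> \<alpha>"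
proof -
  \<comment> \<open>the bound holds for every That\<close>
  interpret changepoint_model N Q Sf A n h B \<epsilon>
    by (rule changepoint_model.intro) (use laws laws_sets sym eps in auto)
  show ?thesis
  proof (rule measure_le_level_if_subset_false_rejection, safe)
    fix \<omega> \<tau>
    assume "\<omega> \<in> space \<Omega>" "\<tau> \<in> true_null Q n h"
      and "perm_threshold A n h \<alpha> B (snd (snd \<omega>)) < ereal (local_stat A h (scores Sf \<epsilon> (fst \<omega>) (fst (snd \<omega>))) \<tau>)"
    then show "\<omega> \<in> false_rejection (nat \<lceil>(1 - \<alpha>) * real (B + 1)\<rceil>)"
      unfolding score_def[symmetric] by (rule threshold_exceedance_imp_false_rejection[OF alpha(2)])
  qed (use alpha in simp)
qed

end
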